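(* Let $L$ be a language of algebras, let $\mathfrak A,\mathfrak B$ be $L$-algebras with universes $A,B$, and let $H:\mathfrak A\to\mathfrak B$ be a homomorphism. (1) Let $a,b\in A$ and suppose that: if every element of $\uparrow_{\mathfrak A}(a\to b)$ is trivial in $(\mathfrak A,\mathfrak B)$, then every element of $\uparrow_{\mathfrak B}(Ha\to Hb)$ is trivial in $(\mathfrak A,\mathfrak B)$. Then $a\to b\lesssim_{(\mathfrak A,\mathfrak B)}Ha\to Hb$. (2) If $H$ is an isomorphism, then $a:b\approx_{(\mathfrak A,\mathfrak B)}Ha:Hb$ for all $a,b\in A$.
   Context: Let $L$ be a language of algebras: a set of function symbols, each with an arity in $\mathbb N$ (constants are 0-ary function symbols). Fix a countably infinite set $X$ of variables; $T_{L,X}$ is the set of $L$-terms over $X$, and $X(s)$ denotes the set of variables occurring in a term $s$. For an $L$-algebra $\mathfrak A$ with universe $A$, every term $s$ induces a function $s^{\mathfrak A}$, evaluated at assignments of elements of $A$ to variables. A homomorphism $H:\mathfrak A\to\mathfrak B$ is a map $A\to B$ commuting with all function symbols of $L$; an isomorphism is a bijective homomorphism. An arrow of $\mathfrak A$ is a pair $(a,b)\in A\times A$, written $a\to b$. The generalizations of an arrow $a\to b$ in $\mathfrak A$ are the pairs of arbitrary terms $s\to t$ with $s,t\in T_{L,X}$ such that there is an assignment $\sigma$ of elements of $A$ to the variables in $X(s)\cup X(t)$ with $s^{\mathfrak A}(\sigma)=a$ and $t^{\mathfrak A}(\sigma)=b$; their set is denoted $\uparrow_{\mathfrak A}(a\to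 b)$. For $L$-algebras $\mathfrak A,\mathfrak B$, an arrow $a\to b$ of $\mathfrak A$ and an arrow $c\to d$ of $\mathfrak B$, set $(a\to b)\uparrow_{(\mathfrak A,\mathfrak B)}(c\to d):=\uparrow_{\mathfrak A}(a\to b)\cap\uparrow_{\mathfrak B}(c\to d)$. A pair of terms $s\to t$ is trivial in $(\mathfrak A,\mathfrak B)$ if it belongs to $\uparrow_{\mathfrak A}(e)$ for every arrow $e$ of $\mathfrak A$ and to $\uparrow_{\mathfrak B}(e')$ for every arrow $e'$ of $\mathfrak B$. We write $a\to b\lesssim_{(\mathfrak A,\mathfrak B)}c\to d$ iff either (i) every element of $\uparrow_{\mathfrak A}(a\to b)\cup\uparrow_{\mathfrak B}(c\to d)$ is trivial in $(\mathfrak A,\mathfrak B)$, or (ii) $(a\to b)\uparrow_{(\mathfrak A,\mathfrak B)}(c\to d)$ contains an element not trivial in $(\mathfrak A,\mathfrak B)$ and, for every arrow $c'\to d'$ of $\mathfrak B$, the inclusion $(a\to b)\uparrow_{(\mathfrak A,\mathfrak B)}(c\to d)\subseteq(a\to b)\uparrow_{(\mathfrak A,\mathfrak B)}(c'\to d')$ implies equality of these two sets. Define $a\to b\approx_{(\mathfrak A,\mathfrak B)}c\to d$ iff $a\to b\lesssim_{(\mathfrak A,\mathfrak B)}c\to d$ and $c\to d\lesssim_{(\mathfrak B,\mathfrak A)}a\to b$. For $a,b\in A$ and $c,d\in B$, the similarity-based analogical proportion $a:b\approx_{(\mathfrak A,\mathfrak B)}c:d$ holds iff $a\to b\approx_{(\mathfrak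 A,\mathfrak B)}c\to d$ and $b\to a\approx_{(\mathfrak A,\mathfrak B)}d\to c$. We write $\approx_{\mathfrak A}$ for $\approx_{(\mathfrak A,\mathfrak A)}$. *)

theory Defs
  imports Main
begin

text \<open>Language: function symbols of type 'f with arity function ar :: 'f => nat.
  Variables: the countably infinite type nat.\<close>

datatype 'f trm = Var nat | Fun 'f "'f trm list"

fun vars :: "'f trm \<Rightarrow> nat set" where
  "vars (Var x) = {x}"
| "vars (Fun f ts) = (\<Union>t\<in>set ts. vars t)"

fun wf_trm :: "('f \<Rightarrow> nat) \<Rightarrow> 'f trm \<Rightarrow> bool" where
  "wf_trm ar (Var x) = True"
| "wf_trm ar (Fun f ts) = (length ts = ar f \<and> (\<forall>t\<in>set ts. wf_trm ar t))"

type_synonym ('f, 'a) alg = "'a set \<times> ('f \<Rightarrow> 'a list \<Rightarrow> 'a)"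

definition univ :: "('f, 'a) alg \<Rightarrow> 'a set" where "univ \<A> = fst \<A>"
definition interp :: "('f, 'a) alg \<Rightarrow> 'f \<Rightarrow> 'a list \<Rightarrow> 'a" where "interp \<A> = snd \<A>"

definition is_algebra :: "('f \<Rightarrow> nat) \<Rightarrow> ('f, 'a) alg \<Rightarrow> bool" where
  "is_algebra ar \<A> \<longleftrightarrow>
     (\<forall>f xs. length xs = ar f \<and> set xs \<subseteq> univ \<A> \<longrightarrow> interp \<A> f xs \<in> univ \<A>)"

fun eval :: "('f, 'a) alg \<Rightarrow> (nat \<Rightarrow> 'a) \<Rightarrow> 'f trm \<Rightarrow> 'a" where
  "eval \<A> \<sigma> (Var x) = \<sigma> x"
| "eval \<A> \<sigma> (Fun f ts) = interp \<A> f (map (eval \<A> \<sigma>) ts)"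

definition is_hom :: "('f \<Rightarrow> nat) \<Rightarrow> ('f, 'a) alg \<Rightarrow> ('f, 'b) alg \<Rightarrow> ('a \<Rightarrow> 'b) \<Rightarrow> bool" where
  "is_hom ar \<A> \<B> H \<longleftrightarrow> H ` univ \<A> \<subseteq> univ \<B> \<and>
     (\<forall>f xs. length xs = ar f \<and> set xs \<subseteq> univ \<A> \<longrightarrow>
        H (interp \<A> f xs) = interp \<B> f (map H xs))"

definition is_iso :: "('f \<Rightarrow> nat) \<Rightarrow> ('f, 'a) alg \<Rightarrow> ('f, 'b) alg \<Rightarrow> ('a \<Rightarrow> 'b) \<Rightarrow> bool" where
  "is_iso ar \<A> \<B> H \<longleftrightarrow> is_hom ar \<A> \<B> H \<and> bij_betw H (univ \<A>) (univ \<B>)"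

definition gen :: "('f \<Rightarrow> nat) \<Rightarrow> ('f, 'a) alg \<Rightarrow> 'a \<Rightarrow> 'a \<Rightarrow> ('f trm \<times> 'f trm) set" where
  "gen ar \<A> a b = {(s, t). wf_trm ar s \<and> wf_trm ar t \<and>
     (\<exists>\<sigma>. \<sigma> ` (vars s \<union> vars t) \<subseteq> univ \<A> \<and> eval \<A> \<sigma> s = a \<and> eval \<A> \<sigma> t = b)}"

definition gen2 :: "('f \<Rightarrow> nat) \<Rightarrow> ('f, 'a) alg \<Rightarrow> ('f, 'b) alg \<Rightarrow> 'a \<Rightarrow> 'a \<Rightarrow> 'b \<Rightarrow> 'b
    \<Rightarrow> ('f trm \<times> 'f trm) set" where
  "gen2 ar \<A> \<B> a b c d = gen ar \<A> a b \<inter> gen ar \<B> c d"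

definition trivial :: "('f \<Rightarrow> nat) \<Rightarrow> ('f, 'a) alg \<Rightarrow> ('f, 'b) alg \<Rightarrow> 'f trm \<times> 'f trm \<Rightarrow> bool" where
  "trivial ar \<A> \<B> st \<longleftrightarrow>
     (\<forall>a\<in>univ \<A>. \<forall>b\<in>univ \<A>. st \<in> gen ar \<A> a b) \<and>
     (\<forall>c\<in>univ \<B>. \<forall>d\<in>univ \<B>. st \<in> gen ar \<B> c d)"

definition lesssim :: "('f \<Rightarrow> nat) \<Rightarrow> ('f, 'a) alg \<Rightarrow> ('f, 'b) alg \<Rightarrow> 'a \<Rightarrow> 'a \<Rightarrow> 'b \<Rightarrow> 'b \<Rightarrow> bool" where
  "lesssim ar \<A> \<B> a b c d \<longleftrightarrow>
     (\<forall>st \<in> gen ar \<A> a b \<union> gen ar \<B> c d. trivial ar \<A> \<B> st) \<or>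
     ((\<exists>st \<in> gen2 ar \<A> \<B> a b c d. \<not> trivial ar \<A> \<B> st) \<and>
      (\<forall>c'\<in>univ \<B>. \<forall>d'\<in>univ \<B>.
         gen2 ar \<A> \<B> a b c d \<subseteq> gen2 ar \<A> \<B> a b c' d' \<longrightarrow>
         gen2 ar \<A> \<B> a b c d = gen2 ar \<A> \<B> a b c' d'))"

definition arrow_approx :: "('f \<Rightarrow> nat) \<Rightarrow> ('f, 'a) alg \<Rightarrow> ('f, 'b) alg \<Rightarrow> 'a \<Rightarrow> 'a \<Rightarrow> 'b \<Rightarrow> 'b \<Rightarrow> bool" where
  "arrow_approx ar \<A> \<B> a b c d \<longleftrightarrow> lesssim ar \<A> \<B> a b c d \<and> lesssim ar \<B> \<A> c d a b"

definition analogy :: "('f \<Rightarrow> nat) \<Rightarrow> ('f, 'a) alg \<Rightarrow> ('f, 'b) alg \<Rightarrow> 'a \<Rightarrow> 'a \<Rightarrow> 'b \<Rightarrow> 'b \<Rightarrow> bool" where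
  "analogy ar \<A> \<B> a b c d \<longleftrightarrow> arrow_approx ar \<A> \<B> a b c d \<and> arrow_approx ar \<A> \<B> b a d c"

end

theory Submission
  imports Defs
begin

text \<open>A homomorphism H carries every witness of a generalization s \<rightarrow> t of a \<rightarrow> b in \<A>
  to a witness in \<B> of the same terms for H a \<rightarrow> H b, so generalizations only grow along H.
  Hence the joint generalizations of a \<rightarrow> b and H a \<rightarrow> H b are all generalizations of
  a \<rightarrow> b, which is the largest value such a joint set can take: H a \<rightarrow> H b is maximally
  similar. For an isomorphism the inverse is a homomorphism too, so both arrows have the
  same generalizations, and arrows with equal generalizations are similar in both directions.\<close>

lemma eval_in_univ:
  assumes "is_algebra ar \<A>" "wf_trm ar t" "\<sigma> ` vars t \<subseteq> univ \<A>"
  shows "eval \<A> \<sigma> t \<in> univ \<A>"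
  using assms(2,3)
proof (induction t)
  case (Fun f ts)
  then show ?case using assms(1) unfolding is_algebra_def by (auto simp: image_subset_iff)
qed simp

lemma eval_hom:
  assumes "is_algebra ar \<A>" "is_hom ar \<A> \<B> H" "wf_trm ar t" "\<sigma> ` vars t \<subseteq> univ \<A>"
  shows "H (eval \<A> \<sigma> t) = eval \<B> (H \<circ> \<sigma>) t"
  using assms(3,4)
proof (induction t)
  case (Fun f ts)
  have args_in_univ: "set (map (eval \<A> \<sigma>) ts) \<subseteq> univ \<A>"
    using Fun.prems eval_in_univ[OF assms(1)] by (auto simp: image_subset_iff)
  have "H (eval \<A> \<sigma> (Fun f ts)) = interp \<B> f (map H (map (eval \<A> \<sigma>) ts))"
    using assms(2) args_in_univ Fun.prems unfolding is_hom_def by auto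
  also have "map H (map (eval \<A> \<sigma>) ts) = map (eval \<B> (H \<circ> \<sigma>)) ts"
    using Fun by (auto simp: image_subset_iff comp_def)
  finally show ?case by (simp add: comp_def)
qed simp

lemma gen_subset_gen_hom:
  assumes "is_algebra ar \<A>" "is_hom ar \<A> \<B> H"
  shows "gen ar \<A> a b \<subseteq> gen ar \<B> (H a) (H b)"
proof
  fix st assume "st \<in> gen ar \<A> a b"
  then obtain s t \<sigma> where st: "st = (s, t)" "wf_trm ar s" "wf_trm ar t"
    and \<sigma>: "\<sigma> ` (vars s \<union> vars t) \<subseteq> univ \<A>" "eval \<A> \<sigma> s = a" "eval \<A> \<sigma> t = b"
    unfolding gen_def by auto
  have "(H \<circ> \<sigma>) ` (vars s \<union> vars t) \<subseteq> univ \<B>"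
    using \<sigma>(1) assms(2) unfolding is_hom_def by auto
  moreover have "eval \<B> (H \<circ> \<sigma>) s = H a" "eval \<B> (H \<circ> \<sigma>) t = H b"
    using eval_hom[OF assms, of s \<sigma>] eval_hom[OF assms, of t \<sigma>] st \<sigma> by (auto simp: image_subset_iff)
  ultimately show "st \<in> gen ar \<B> (H a) (H b)" using st unfolding gen_def by blast
qed

lemma is_hom_inv_into:
  assumes "is_algebra ar \<A>" "is_iso ar \<A> \<B> H"
  shows "is_hom ar \<B> \<A> (inv_into (univ \<A>) H)"
proof -
  let ?G = "inv_into (univ \<A>) H"
  have bij: "bij_betw H (univ \<A>) (univ \<B>)" and hom: "is_hom ar \<A> \<B> H"
    using assms(2) unfolding is_iso_def by auto
  have G_into: "?G ` univ \<B> \<subseteq> univ \<A>"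
    using bij by (metis bij_betw_imp_surj_on image_subsetI inv_into_into)
  have "?G (interp \<B> f ys) = interp \<A> f (map ?G ys)"
    if ys: "length ys = ar f" "set ys \<subseteq> univ \<B>" for f ys
  proof -
    let ?xs = "map ?G ys"
    have xs: "length ?xs = ar f" "set ?xs \<subseteq> univ \<A>" using ys G_into by auto
    have "map H ?xs = ys"
      using ys(2) bij by (simp add: map_idI subset_iff bij_betw_inv_into_right)
    then have "H (interp \<A> f ?xs) = interp \<B> f ys" using hom xs unfolding is_hom_def by metis
    moreover have "interp \<A> f ?xs \<in> univ \<A>" using assms(1) xs unfolding is_algebra_def by blast
    ultimately show ?thesis using bij by (metis bij_betw_inv_into_left)
  qed
  then show ?thesis using G_into unfolding is_hom_def by blast
qed

lemma gen_eq_gen_iso: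
  assumes "is_algebra ar \<A>" "is_algebra ar \<B>" "is_iso ar \<A> \<B> H"
    and "a \<in> univ \<A>" "b \<in> univ \<A>"
  shows "gen ar \<A> a b = gen ar \<B> (H a) (H b)"
proof
  show "gen ar \<A> a b \<subseteq> gen ar \<B> (H a) (H b)"
    using gen_subset_gen_hom[OF assms(1)] assms(3) unfolding is_iso_def by blast
  have "bij_betw H (univ \<A>) (univ \<B>)" using assms(3) unfolding is_iso_def by blast
  then have "inv_into (univ \<A>) H (H x) = x" if "x \<in> univ \<A>" for x
    using that by (simp add: bij_betw_inv_into_left)
  then show "gen ar \<B> (H a) (H b) \<subseteq> gen ar \<A> a b"
    using gen_subset_gen_hom[OF assms(2) is_hom_inv_into[OF assms(1,3)], of "H a" "H b"] assms(4,5)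
    by simp
qed

text \<open>Every joint set of generalizations of a \<rightarrow> b is contained in that of a \<rightarrow> b alone,
  so once it reaches that set it cannot be enlarged.\<close>

lemma lesssim_if_gen_subset:
  assumes "gen ar \<A> a b \<subseteq> gen ar \<B> c d"
    and "(\<forall>st\<in>gen ar \<A> a b. trivial ar \<A> \<B> st) \<longrightarrow> (\<forall>st\<in>gen ar \<B> c d. trivial ar \<A> \<B> st)"
  shows "lesssim ar \<A> \<B> a b c d"
proof -
  have "gen2 ar \<A> \<B> a b c d = gen ar \<A> a b"
    using assms(1) unfolding gen2_def by blast
  then show ?thesis
    using assms(2) unfolding lesssim_def by (auto simp: gen2_def)
qed

lemma trivial_sym: "trivial ar \<B> \<A> st \<longleftrightarrow> trivial ar \<A> \<B> st"
  unfolding trivial_def by blast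

lemma arrow_approx_if_gen_eq:
  assumes "gen ar \<A> a b = gen ar \<B> c d"
  shows "arrow_approx ar \<A> \<B> a b c d"
  using assms unfolding arrow_approx_def
  by (auto intro!: lesssim_if_gen_subset simp: trivial_sym)

theorem theorem7:
  fixes ar :: "'f \<Rightarrow> nat" and \<A> :: "('f, 'a) alg" and \<B> :: "('f, 'b) alg" and H :: "'a \<Rightarrow> 'b"
  assumes "is_algebra ar \<A>" and "is_algebra ar \<B>" and "is_hom ar \<A> \<B> H"
  shows "(\<forall>a\<in>univ \<A>. \<forall>b\<in>univ \<A>.
            ((\<forall>st\<in>gen ar \<A> a b. trivial ar \<A> \<B> st) \<longrightarrow>
             (\<forall>st\<in>gen ar \<B> (H a) (H b). trivial ar \<A> \<B> st)) \<longrightarrow>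
            lesssim ar \<A> \<B> a b (H a) (H b))
       \<and> (is_iso ar \<A> \<B> H \<longrightarrow>
            (\<forall>a\<in>univ \<A>. \<forall>b\<in>univ \<A>. analogy ar \<A> \<B> a b (H a) (H b)))"
proof (intro conjI ballI impI)
  fix a b
  assume "(\<forall>st\<in>gen ar \<A> a b. trivial ar \<A> \<B> st) \<longrightarrow>
          (\<forall>st\<in>gen ar \<B> (H a) (H b). trivial ar \<A> \<B> st)"
  then show "lesssim ar \<A> \<B> a b (H a) (H b)"
    by (rule lesssim_if_gen_subset[OF gen_subset_gen_hom[OF assms(1,3)]])
next
  fix a b assume "is_iso ar \<A> \<B> H" "a \<in> univ \<A>" "b \<in> univ \<A>"
  then show "analogy ar \<A> \<B> a b (H a) (H b)"
    using gen_eq_gen_iso[OF assms(1,2)] unfolding analogy_def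
    by (simp add: arrow_approx_if_gen_eq)
qed

end
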